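(* For every integer $n\ge 3$, the disjunctive domination number of the torus grid graph $C_3\Box C_n$ is $$\gamma_2^d(C_3\Box C_n)=\left\lceil \frac{n}{2}\right\rceil.$$
   Context: $C_k$ denotes the cycle on $k$ vertices, and $G\Box H$ is the Cartesian product: vertex set $V(G)\times V(H)$, with $(g,h)\sim(g',h')$ iff either $g=g'$ and $hh'\in E(H)$, or $h=h'$ and $gg'\in E(G)$. For a simple graph $\Gamma$ and a vertex $v$, let $\Gamma(v)$ be the set of vertices at distance $1$ from $v$ and $\Gamma_2(v)$ the set of vertices at distance exactly $2$ from $v$. A set $S\subseteq V(\Gamma)$ is a disjunctive dominating set if every vertex $v\notin S$ satisfies $|\Gamma(v)\cap S|\ge 1$ or $|\Gamma_2(v)\cap S|\ge 2$. The disjunctive domination number $\gamma_2^d(\Gamma)$ is the minimum cardinality of a disjunctive dominating set of $\Gamma$. *)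

theory Defs
  imports Main
begin

(* A simple graph is given by a finite vertex set V and a symmetric irreflexive
   adjacency relation E on V. *)

inductive walk :: "'a set \<Rightarrow> ('a \<Rightarrow> 'a \<Rightarrow> bool) \<Rightarrow> 'a \<Rightarrow> 'a \<Rightarrow> nat \<Rightarrow> bool"
  for V E where
  walk0: "u \<in> V \<Longrightarrow> walk V E u u 0"
| walkS: "u \<in> V \<Longrightarrow> E u w \<Longrightarrow> walk V E w v n \<Longrightarrow> walk V E u v (Suc n)"

definition at_dist :: "'a set \<Rightarrow> ('a \<Rightarrow> 'a \<Rightarrow> bool) \<Rightarrow> 'a \<Rightarrow> 'a \<Rightarrow> nat \<Rightarrow> bool" where
  "at_dist V E u v d \<longleftrightarrow> walk V E u v d \<and> (\<forall>m<d. \<not> walk V E u v m)"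

definition nbhd :: "'a set \<Rightarrow> ('a \<Rightarrow> 'a \<Rightarrow> bool) \<Rightarrow> 'a \<Rightarrow> 'a set" where
  "nbhd V E v = {u \<in> V. at_dist V E v u 1}"

definition nbhd2 :: "'a set \<Rightarrow> ('a \<Rightarrow> 'a \<Rightarrow> bool) \<Rightarrow> 'a \<Rightarrow> 'a set" where
  "nbhd2 V E v = {u \<in> V. at_dist V E v u 2}"

definition disj_dom_set :: "'a set \<Rightarrow> ('a \<Rightarrow> 'a \<Rightarrow> bool) \<Rightarrow> 'a set \<Rightarrow> bool" where
  "disj_dom_set V E S \<longleftrightarrow> S \<subseteq> V \<and>
     (\<forall>v \<in> V - S. card (nbhd V E v \<inter> S) \<ge> 1 \<or> card (nbhd2 V E v \<inter> S) \<ge> 2)"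

definition disj_dom_num :: "'a set \<Rightarrow> ('a \<Rightarrow> 'a \<Rightarrow> bool) \<Rightarrow> nat" where
  "disj_dom_num V E = (LEAST k. \<exists>S. disj_dom_set V E S \<and> card S = k)"

definition cycle_V :: "nat \<Rightarrow> nat set" where
  "cycle_V k = {0..<k}"

definition cycle_E :: "nat \<Rightarrow> nat \<Rightarrow> nat \<Rightarrow> bool" where
  "cycle_E k i j \<longleftrightarrow> i < k \<and> j < k \<and> i \<noteq> j \<and> (j = (i + 1) mod k \<or> i = (j + 1) mod k)"

definition cart_V :: "'a set \<Rightarrow> 'b set \<Rightarrow> ('a \<times> 'b) set" where
  "cart_V VG VH = VG \<times> VH"

definition cart_E :: "('a \<Rightarrow> 'a \<Rightarrow> bool) \<Rightarrow> ('b \<Rightarrow> 'b \<Rightarrow> bool) \<Rightarrow> ('a \<times> 'b) \<Rightarrow> ('a \<times> 'b) \<Rightarrow> bool" where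
  "cart_E EG EH p q \<longleftrightarrow>
     (fst p = fst q \<and> EH (snd p) (snd q)) \<or> (snd p = snd q \<and> EG (fst p) (fst q))"

end

theory Submission
  imports Defs
begin

(* Lower bound: let t k be the number of vertices of S in column k (indices mod n). If column
   j + 2 contains no vertex of S and neither do (x, j + 1), (x, j + 3), then (x, j + 2) has no
   neighbour in S, so it needs two vertices of S at distance two; these lie in columns j + 1,
   j + 3 or at (x, j), (x, j + 4). This constrains five consecutive column sizes, and a potential
   on windows of four column sizes turns the constraints into 2 t (j + 2) \<ge> 1 + (drop of the
   potential); summing around the cycle gives n \<le> 2 |S|.
   Upper bound: the even positions of one row form a disjunctive dominating set. *)

lemma walk_0_iff: "walk V E u v 0 \<longleftrightarrow> u \<in> V \<and> u = v"
  by (auto elim: walk.cases intro: walk.intros)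

lemma walk_Suc_iff: "walk V E u v (Suc m) \<longleftrightarrow> u \<in> V \<and> (\<exists>w. E u w \<and> walk V E w v m)"
  by (auto elim: walk.cases intro: walk.intros)

lemma nbhd_iff: "u \<in> nbhd V E v \<longleftrightarrow> v \<in> V \<and> u \<in> V \<and> E v u \<and> u \<noteq> v"
  by (auto simp: nbhd_def at_dist_def walk_Suc_iff walk_0_iff)

lemma nbhd2_iff:
  "u \<in> nbhd2 V E v \<longleftrightarrow> v \<in> V \<and> u \<in> V \<and> (\<exists>w \<in> V. E v w \<and> E w u) \<and> u \<noteq> v \<and> \<not> E v u"
  by (auto simp: nbhd2_def at_dist_def numeral_2_eq_2 less_Suc_eq walk_Suc_iff walk_0_iff)

lemma disj_dom_setI:
  assumes "S \<subseteq> V" "finite V"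
    and "\<And>v. v \<in> V - S \<Longrightarrow> (\<exists>u \<in> S. u \<in> nbhd V E v)
           \<or> (\<exists>u \<in> S. \<exists>u' \<in> S. u \<noteq> u' \<and> u \<in> nbhd2 V E v \<and> u' \<in> nbhd2 V E v)"
  shows "disj_dom_set V E S"
  unfolding disj_dom_set_def
proof (intro conjI ballI)
  show "S \<subseteq> V" by fact
next
  fix v assume v: "v \<in> V - S"
  have fin: "finite (nbhd V E v)" "finite (nbhd2 V E v)"
    using \<open>finite V\<close> by (auto simp: nbhd_def nbhd2_def)
  from assms(3)[OF v]
  show "1 \<le> card (nbhd V E v \<inter> S) \<or> 2 \<le> card (nbhd2 V E v \<inter> S)"
  proof (elim disjE bexE conjE)
    fix u assume "u \<in> S" "u \<in> nbhd V E v"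
    then have "nbhd V E v \<inter> S \<noteq> {}" by blast
    with fin(1) show ?thesis by (simp add: Suc_le_eq card_gt_0_iff)
  next
    fix u u' assume "u \<noteq> u'" "u \<in> S" "u' \<in> S" "u \<in> nbhd2 V E v" "u' \<in> nbhd2 V E v"
    then have "card {u, u'} \<le> card (nbhd2 V E v \<inter> S)"
      using fin(2) by (intro card_mono) auto
    with \<open>u \<noteq> u'\<close> show ?thesis by simp
  qed
qed

lemma cycle_E_3_iff: "cycle_E 3 x y \<longleftrightarrow> x < 3 \<and> y < 3 \<and> x \<noteq> y"
  unfolding cycle_E_def by (auto simp: mod_Suc)

lemma cycle_E_next:
  assumes "j < n" "n \<ge> 2"
  shows "cycle_E n j ((j + 1) mod n)"
  using assms by (auto simp: cycle_E_def mod_Suc)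

lemma cycle_E_nextD:
  assumes "cycle_E n ((j + 1) mod n) k"
  shows "k = j mod n \<or> k = (j + 2) mod n"
proof -
  have "k < n" using assms by (simp add: cycle_E_def)
  from assms consider "k = (j + 2) mod n" | "Suc k mod n = Suc j mod n"
    by (auto simp: cycle_E_def mod_Suc_eq)
  then show ?thesis
  proof cases
    case 2
    then have "k mod n = j mod n"
      by (metis mod_Suc nat.inject not_less_eq zero_less_Suc)
    then show ?thesis using \<open>k < n\<close> by simp
  qed simp
qed

abbreviation torus_V :: "nat \<Rightarrow> (nat \<times> nat) set" where
  "torus_V n \<equiv> cart_V (cycle_V 3) (cycle_V n)"

abbreviation torus_E :: "nat \<Rightarrow> nat \<times> nat \<Rightarrow> nat \<times> nat \<Rightarrow> bool" where
  "torus_E n \<equiv> cart_E (cycle_E 3) (cycle_E n)"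

lemma torus_V_iff: "(x, j) \<in> torus_V n \<longleftrightarrow> x < 3 \<and> j < n"
  by (simp add: cart_V_def cycle_V_def)

lemma finite_torus_V: "finite (torus_V n)"
  by (simp add: cart_V_def cycle_V_def)

lemma torus_E_iff: "torus_E n (x, j) (y, k) \<longleftrightarrow> (x = y \<and> cycle_E n j k) \<or> (j = k \<and> cycle_E 3 x y)"
  by (simp add: cart_E_def)

lemma torus_E_nextD:
  assumes "torus_E n (x, (j + 1) mod n) (y, k)"
  shows "(y = x \<and> (k = j mod n \<or> k = (j + 2) mod n)) \<or> k = (j + 1) mod n"
  using assms cycle_E_nextD by (auto simp: torus_E_iff)

lemma sum_lessThan_Suc_shift_periodic:
  fixes f :: "nat \<Rightarrow> 'a::cancel_comm_monoid_add"
  assumes "f n = f 0"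
  shows "(\<Sum>j<n. f (Suc j)) = (\<Sum>j<n. f j)"
proof -
  have "f 0 + (\<Sum>j<n. f (Suc j)) = f 0 + (\<Sum>j<n. f j)"
    using sum.lessThan_Suc_shift[of f n] sum.lessThan_Suc[of f n] assms by (simp add: add.commute)
  then show ?thesis by simp
qed

lemma periodic_potential_bound:
  fixes t W :: "nat \<Rightarrow> nat"
  assumes t_periodic: "\<And>k. t (k + n) = t k" and W_periodic: "W n = W 0"
    and step: "\<And>j. W j + 1 \<le> 2 * t (j + 2) + W (j + 1)"
  shows "n \<le> 2 * (\<Sum>j<n. t j)"
proof -
  have "(\<Sum>j<n. W j) + n = (\<Sum>j<n. W j + 1)"
    by (subst sum.distrib) simp
  also have "\<dots> \<le> (\<Sum>j<n. 2 * t (j + 2) + W (j + 1))"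
    by (intro sum_mono step)
  also have "\<dots> = 2 * (\<Sum>j<n. t (Suc (Suc j))) + (\<Sum>j<n. W (Suc j))"
    by (simp add: sum.distrib sum_distrib_left)
  also have "\<dots> = 2 * (\<Sum>j<n. t j) + (\<Sum>j<n. W j)"
  proof -
    have "t (Suc n) = t (Suc 0)" "t n = t 0"
      using t_periodic[of 1] t_periodic[of 0] by simp_all
    then have "(\<Sum>j<n. t (Suc (Suc j))) = (\<Sum>j<n. t j)"
      using sum_lessThan_Suc_shift_periodic[of "\<lambda>k. t (Suc k)" n]
        sum_lessThan_Suc_shift_periodic[of t n] by simp
    moreover have "(\<Sum>j<n. W (Suc j)) = (\<Sum>j<n. W j)"
      using W_periodic by (rule sum_lessThan_Suc_shift_periodic)
    ultimately show ?thesis by simp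
  qed
  finally show ?thesis by linarith
qed

definition carry :: "nat \<Rightarrow> nat \<Rightarrow> nat \<Rightarrow> nat \<Rightarrow> nat" where
  "carry a b c d =
    (if a = 0 \<and> b = 0 then (if c = 0 then (if d \<ge> 2 then 2 else 0) else if c = 1 then 2 else 3)
     else if a = 0 \<and> b = 1 then 1
     else if a = 1 \<and> b = 0 then (if c = 0 then (if d \<ge> 2 then 2 else 1) else 2)
     else if a \<ge> 2 \<and> b = 0 then 1 else 0)"

lemma carry_step:
  fixes a b c d e :: nat
  assumes "a \<le> 3" "b \<le> 3" "c \<le> 3" "d \<le> 3" "e \<le> 3"
    and "c = 0 \<Longrightarrow> b = 0 \<Longrightarrow> d = 0 \<Longrightarrow> a = 3 \<and> e = 3"
    and "c = 0 \<Longrightarrow> b + d = 1 \<Longrightarrow> 2 \<le> a + e"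
  shows "carry a b c d + 1 \<le> 2 * c + carry b c d e"
proof -
  have cases_le_3: "x \<le> 3 \<Longrightarrow> x = 0 \<or> x = 1 \<or> x = 2 \<or> x = 3" for x :: nat
    by auto
  show ?thesis
    using cases_le_3[OF assms(1)] cases_le_3[OF assms(2)] cases_le_3[OF assms(3)]
      cases_le_3[OF assms(4)] cases_le_3[OF assms(5)] assms(6,7)
    unfolding carry_def by (elim disjE) simp_all
qed

locale torus_disj_dom =
  fixes n :: nat and S :: "(nat \<times> nat) set"
  assumes n_pos: "0 < n" and disj_dom: "disj_dom_set (torus_V n) (torus_E n) S"
begin

definition col :: "nat \<Rightarrow> nat set" where
  "col k = {x. (x, k mod n) \<in> S}"

lemma S_subset: "S \<subseteq> torus_V n"
  using disj_dom by (simp add: disj_dom_set_def)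

lemma col_subset: "col k \<subseteq> {..<3}"
  using S_subset by (auto simp: col_def torus_V_iff)

lemma finite_col: "finite (col k)"
  using col_subset finite_subset by blast

lemma card_col_le: "card (col k) \<le> 3"
  using card_mono[OF _ col_subset] by simp

lemma col_add_period: "col (k + n) = col k"
  by (simp add: col_def)

lemma card_eq_sum_card_col: "card S = (\<Sum>j<n. card (col j))"
proof -
  have "card S = (\<Sum>j<n. card {p \<in> S. snd p = j})"
    using sum.group[of S "{..<n}" snd "\<lambda>_. 1 :: nat"] S_subset finite_torus_V
    by (force simp: finite_subset torus_V_iff)
  also have "\<dots> = (\<Sum>j<n. card (col j))"
  proof (rule sum.cong)
    fix j assume "j \<in> {..<n}"
    then have "bij_betw fst {p \<in> S. snd p = j} (col j)"
      by (auto simp: bij_betw_def inj_on_def col_def image_iff)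
    then show "card {p \<in> S. snd p = j} = card (col j)"
      by (rule bij_betw_same_card)
  qed simp
  finally show ?thesis .
qed

lemma two_le_flanking_count:
  assumes "x < 3" "col (j + 2) = {}" "x \<notin> col (j + 1)" "x \<notin> col (j + 3)"
  shows "2 \<le> card (col (j + 1)) + card (col (j + 3)) + card (col j \<inter> {x}) + card (col (j + 4) \<inter> {x})"
proof -
  define v where "v = (x, (j + 2) mod n)"
  define cells :: "nat \<Rightarrow> nat set \<Rightarrow> (nat \<times> nat) set"
    where "cells c A = (\<lambda>y. (y, c mod n)) ` A" for c A
  have card_cells: "card (cells c A) = card A" for c A
    unfolding cells_def by (rule card_image) (simp add: inj_on_def)
  have in_col: "(y, c mod n) \<in> S \<Longrightarrow> y \<in> col c" for y c
    by (simp add: col_def)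
  have "j + 1 + 1 = j + 2" "j + 1 + 2 = j + 3" "j + 2 + 1 = j + 3" "j + 2 + 2 = j + 4"
    by simp_all
  note adj = torus_E_nextD[where j = j] torus_E_nextD[where j = "j + 1", unfolded this]
    torus_E_nextD[where j = "j + 2", unfolded this]
  have v: "v \<in> torus_V n - S"
    using assms n_pos by (auto simp: v_def torus_V_iff col_def)
  have "nbhd (torus_V n) (torus_E n) v \<inter> S = {}"
    using adj(2) assms(2-4) by (fastforce simp: v_def nbhd_iff dest: in_col)
  moreover have "1 \<le> card (nbhd (torus_V n) (torus_E n) v \<inter> S)
      \<or> 2 \<le> card (nbhd2 (torus_V n) (torus_E n) v \<inter> S)"
    using disj_dom v unfolding disj_dom_set_def by blast
  ultimately have "2 \<le> card (nbhd2 (torus_V n) (torus_E n) v \<inter> S)"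
    by simp
  also have "\<dots> \<le> card (cells (j + 1) (col (j + 1)) \<union> cells (j + 3) (col (j + 3))
                    \<union> cells j (col j \<inter> {x}) \<union> cells (j + 4) (col (j + 4) \<inter> {x}))"
  proof (rule card_mono)
    show "nbhd2 (torus_V n) (torus_E n) v \<inter> S \<subseteq> cells (j + 1) (col (j + 1)) \<union> cells (j + 3) (col (j + 3))
                    \<union> cells j (col j \<inter> {x}) \<union> cells (j + 4) (col (j + 4) \<inter> {x})"
    proof
      fix u assume u: "u \<in> nbhd2 (torus_V n) (torus_E n) v \<inter> S"
      then obtain w where vw: "torus_E n v w" and wu: "torus_E n w u"
        by (auto simp: nbhd2_iff)
      obtain y k z l where u_eq: "u = (y, k)" and w_eq: "w = (z, l)"
        by fastforce
      consider "z = x" "l = (j + 1) mod n" | "z = x" "l = (j + 3) mod n" | "l = (j + 2) mod n"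
        using adj(2) vw unfolding v_def w_eq by blast
      then have "k = (j + 1) mod n \<or> k = (j + 3) mod n \<or> k = (j + 2) mod n
          \<or> (y = x \<and> (k = j mod n \<or> k = (j + 4) mod n))"
      proof cases
        case 1
        then have "torus_E n (x, (j + 1) mod n) (y, k)"
          using wu by (simp only: u_eq w_eq)
        then show ?thesis using adj(1) by blast
      next
        case 2
        then have "torus_E n (x, (j + 3) mod n) (y, k)"
          using wu by (simp only: u_eq w_eq)
        then show ?thesis using adj(3) by blast
      next
        case 3
        then have "torus_E n (z, (j + 2) mod n) (y, k)"
          using wu by (simp only: u_eq w_eq)
        then show ?thesis using adj(2) by blast
      qed
      moreover have "y \<notin> col (j + 2)"
        using assms(2) by simp
      ultimately show "u \<in> cells (j + 1) (col (j + 1)) \<union> cells (j + 3) (col (j + 3))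
                    \<union> cells j (col j \<inter> {x}) \<union> cells (j + 4) (col (j + 4) \<inter> {x})"
        using u by (auto simp: u_eq cells_def col_def)
    qed
  qed (simp add: cells_def finite_col)
  also have "\<dots> \<le> card (col (j + 1)) + card (col (j + 3)) + card (col j \<inter> {x}) + card (col (j + 4) \<inter> {x})"
  proof -
    have "card (A \<union> B \<union> C \<union> D) \<le> card A + card B + card C + card D" for A B C D :: "(nat \<times> nat) set"
      using card_Un_le[of "A \<union> B \<union> C" D] card_Un_le[of "A \<union> B" C] card_Un_le[of A B] by linarith
    from this[of "cells (j + 1) (col (j + 1))" "cells (j + 3) (col (j + 3))"
        "cells j (col j \<inter> {x})" "cells (j + 4) (col (j + 4) \<inter> {x})"]
    show ?thesis by (simp only: card_cells)
  qed
  finally show ?thesis .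
qed

lemma card_col_inter_singleton: "card (col k \<inter> {x}) = (if x \<in> col k then 1 else 0)"
  by auto

lemma empty_gap_full_flanks:
  assumes "card (col (j + 1)) = 0" "card (col (j + 2)) = 0" "card (col (j + 3)) = 0"
  shows "card (col j) = 3 \<and> card (col (j + 4)) = 3"
proof -
  have empty: "col (j + 1) = {}" "col (j + 2) = {}" "col (j + 3) = {}"
    using assms finite_col by simp_all
  have "x \<in> col j \<and> x \<in> col (j + 4)" if "x < 3" for x
    using two_le_flanking_count[OF that empty(2)] empty by (auto simp: card_col_inter_singleton split: if_splits)
  then have "col j = {..<3}" "col (j + 4) = {..<3}"
    using col_subset by blast+
  then show ?thesis by simp
qed

lemma sparse_gap_two_flanks:
  assumes "card (col (j + 2)) = 0" "card (col (j + 1)) + card (col (j + 3)) = 1"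
  shows "2 \<le> card (col j) + card (col (j + 4))"
proof -
  define A where "A = col (j + 1) \<union> col (j + 3)"
  have "col (j + 2) = {}"
    using assms(1) finite_col by simp
  then have "x \<in> col j \<union> col (j + 4)" if "x \<in> {..<3} - A" for x
    using two_le_flanking_count[of x j] that assms(2)
    by (auto simp: A_def card_col_inter_singleton split: if_splits)
  then have "{..<3} - A \<subseteq> col j \<union> col (j + 4)"
    by blast
  moreover have "card A \<le> 1"
    using assms(2) card_Un_le[of "col (j + 1)" "col (j + 3)"] by (simp add: A_def)
  then have "2 \<le> card ({..<3::nat} - A)"
    using diff_card_le_card_Diff[of A "{..<3::nat}"] finite_col by (simp add: A_def)
  ultimately show ?thesis
    using card_mono[of "col j \<union> col (j + 4)"] card_Un_le[of "col j" "col (j + 4)"] finite_col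
    by (meson finite_UnI le_trans)
qed

theorem n_le_twice_card: "n \<le> 2 * card S"
proof -
  define t where "t k = card (col k)" for k
  have "n \<le> 2 * (\<Sum>j<n. t j)"
  proof (rule periodic_potential_bound)
    show t_periodic: "t (k + n) = t k" for k
      by (simp add: t_def col_add_period)
    define W where "W j = carry (t j) (t (j + 1)) (t (j + 2)) (t (j + 3))" for j
    show "W n = W 0"
      using t_periodic[of 0] t_periodic[of 1] t_periodic[of 2] t_periodic[of 3]
      by (simp add: W_def numeral_eq_Suc add.commute)
    show "W j + 1 \<le> 2 * t (j + 2) + W (j + 1)" for j
    proof -
      have shift: "j + 1 + 1 = j + 2" "j + 1 + 2 = j + 3" "j + 1 + 3 = j + 4"
        by simp_all
      show ?thesis
        unfolding W_def t_def shift
        using empty_gap_full_flanks[of j] sparse_gap_two_flanks[of j]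
        by (intro carry_step card_col_le) simp_all
    qed
  qed
  then show ?thesis
    by (simp add: t_def card_eq_sum_card_col)
qed

end

definition row0_evens :: "nat \<Rightarrow> (nat \<times> nat) set" where
  "row0_evens n = (\<lambda>j. (0, j)) ` {j. j < n \<and> even j}"

lemma card_row0_evens: "card (row0_evens n) = (n + 1) div 2"
proof -
  have "{j. j < n \<and> even j} = (\<lambda>i. 2 * i) ` {..<(n + 1) div 2}"
    by (auto elim!: evenE)
  then show ?thesis
    by (simp add: row0_evens_def card_image inj_on_def)
qed

lemma disj_dom_row0_evens:
  assumes "n \<ge> 3"
  shows "disj_dom_set (torus_V n) (torus_E n) (row0_evens n)"
proof (rule disj_dom_setI)
  show "row0_evens n \<subseteq> torus_V n"
    by (auto simp: row0_evens_def torus_V_iff)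
  fix v assume v: "v \<in> torus_V n - row0_evens n"
  then obtain x j where v_eq: "v = (x, j)" and "x < 3" "j < n"
    by (cases v) (auto simp: torus_V_iff)
  show "(\<exists>u \<in> row0_evens n. u \<in> nbhd (torus_V n) (torus_E n) v)
    \<or> (\<exists>u \<in> row0_evens n. \<exists>u' \<in> row0_evens n. u \<noteq> u'
         \<and> u \<in> nbhd2 (torus_V n) (torus_E n) v \<and> u' \<in> nbhd2 (torus_V n) (torus_E n) v)"
  proof (cases "even j")
    case True
    then have "x \<noteq> 0"
      using v v_eq \<open>j < n\<close> by (auto simp: row0_evens_def)
    then have "(0, j) \<in> nbhd (torus_V n) (torus_E n) v"
      using \<open>x < 3\<close> \<open>j < n\<close> by (auto simp: v_eq nbhd_iff torus_V_iff torus_E_iff cycle_E_3_iff)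
    with True \<open>j < n\<close> show ?thesis
      by (auto simp: row0_evens_def)
  next
    case False
    define j' where "j' = (j + 1) mod n"
    have "j' < n" "even j'"
      using False \<open>j < n\<close> assms by (auto simp: j'_def mod_Suc)
    then have next_in: "(0, j') \<in> row0_evens n"
      by (simp add: row0_evens_def)
    have next_adj: "cycle_E n j j'"
      using cycle_E_next \<open>j < n\<close> assms by (simp add: j'_def)
    show ?thesis
    proof (cases "x = 0")
      case True
      then have "(0, j') \<in> nbhd (torus_V n) (torus_E n) v"
        using next_adj \<open>j < n\<close> \<open>j' < n\<close> by (auto simp: v_eq nbhd_iff torus_V_iff torus_E_iff cycle_E_def)
      with next_in show ?thesis by blast
    next
      case False
      have "0 < j"
        using \<open>odd j\<close> by (cases j) auto
      then have prev_in: "(0, j - 1) \<in> row0_evens n" and prev_adj: "cycle_E n j (j - 1)"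
        using \<open>odd j\<close> \<open>j < n\<close> by (auto simp: row0_evens_def cycle_E_def)
      have "j - 1 \<noteq> j'"
        using \<open>0 < j\<close> \<open>j < n\<close> assms by (auto simp: j'_def mod_Suc)
      moreover have "(0, k) \<in> nbhd2 (torus_V n) (torus_E n) v" if "cycle_E n j k" for k
      proof -
        have "k < n" "k \<noteq> j"
          using that by (auto simp: cycle_E_def)
        then show ?thesis
          using that False \<open>x < 3\<close> \<open>j < n\<close>
          by (auto simp: v_eq nbhd2_iff torus_V_iff torus_E_iff cycle_E_3_iff intro!: bexI[of _ "(0, j)"])
      qed
      ultimately show ?thesis
        using prev_in next_in prev_adj next_adj by blast
    qed
  qed
qed (simp add: finite_torus_V)

theorem theorem2:
  fixes n :: nat
  assumes "n \<ge> 3"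
  shows "disj_dom_num (cart_V (cycle_V 3) (cycle_V n)) (cart_E (cycle_E 3) (cycle_E n))
           = (n + 1) div 2"
  unfolding disj_dom_num_def
proof (rule Least_equality)
  show "\<exists>S. disj_dom_set (torus_V n) (torus_E n) S \<and> card S = (n + 1) div 2"
    using disj_dom_row0_evens[OF assms] card_row0_evens by blast
next
  fix k assume "\<exists>S. disj_dom_set (torus_V n) (torus_E n) S \<and> card S = k"
  then obtain S where S: "disj_dom_set (torus_V n) (torus_E n) S" and "card S = k"
    by blast
  have "torus_disj_dom n S"
    using assms S by (simp add: torus_disj_dom_def)
  then have "n \<le> 2 * card S"
    by (rule torus_disj_dom.n_le_twice_card)
  with \<open>card S = k\<close> show "(n + 1) div 2 \<le> k"
    by linarith
qed

end
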